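(* Let $n\in\mathbb{N}$. (i) Let $S$ be a symmetric numerical semigroup and $A\subseteq\{x\in S\mid \frac{\mathrm{F}(S)}{2}<x<\mathrm{F}(S)\}$ with $\#A=n$ such that $S\setminus A$ is a numerical semigroup. Then $\mathrm{l}(S\setminus A)=2n$. (ii) Conversely, for every numerical semigroup $T$ with $\mathrm{l}(T)=2n$ there exist a symmetric numerical semigroup $S$ with $\mathrm{F}(S)=\mathrm{F}(T)$ and a set $A\subseteq\{x\in S\mid \frac{\mathrm{F}(S)}{2}<x<\mathrm{F}(S)\}$ with $\#A=n$ such that $T=S\setminus A$.
   Context: A numerical semigroup is a subset $S\subseteq\mathbb{N}$ closed under addition with $0\in S$ and $\mathbb{N}\setminus S$ finite; $\mathrm{F}(S)=\max(\mathbb{Z}\setminus S)$. $\mathrm{N}(S)=\{s\in S\mid s<\mathrm{F}(S)\}$, $\mathrm{L}(S)=\{x\in\mathbb{N}\setminus S\mid \mathrm{F}(S)-x\notin \mathrm{N}(S)\}$, $\mathrm{l}(S)=\#\mathrm{L}(S)$. A numerical semigroup is irreducible if it is not the intersection of two numerical semigroups properly containing it; symmetric means irreducible with odd Frobenius number. *)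

theory Defs
  imports Complex_Main
begin

definition numerical_semigroup :: "nat set \<Rightarrow> bool" where
  "numerical_semigroup S \<longleftrightarrow> 0 \<in> S \<and> (\<forall>a\<in>S. \<forall>b\<in>S. a + b \<in> S) \<and> finite (UNIV - S)"

text \<open>Frobenius number: the largest integer not in S (equals -1 for S = N).\<close>
definition frob :: "nat set \<Rightarrow> int" where
  "frob S = (GREATEST z::int. z \<notin> int ` S)"

definition NS :: "nat set \<Rightarrow> nat set" where
  "NS S = {s \<in> S. int s < frob S}"

definition LS :: "nat set \<Rightarrow> nat set" where
  "LS S = {x \<in> UNIV - S. frob S - int x \<notin> int ` NS S}"

definition l_num :: "nat set \<Rightarrow> nat" where
  "l_num S = card (LS S)"

definition irreducible_ns :: "nat set \<Rightarrow> bool" where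
  "irreducible_ns S \<longleftrightarrow> numerical_semigroup S \<and>
     \<not> (\<exists>S1 S2. numerical_semigroup S1 \<and> numerical_semigroup S2 \<and>
               S \<subset> S1 \<and> S \<subset> S2 \<and> S = S1 \<inter> S2)"

definition symmetric_ns :: "nat set \<Rightarrow> bool" where
  "symmetric_ns S \<longleftrightarrow> irreducible_ns S \<and> odd (frob S)"

end

theory Submission
  imports Defs
begin

text \<open>
  Write \<open>F = frob T\<close> and \<open>x\<^sup>* = F - x\<close> (\<open>mirror T x\<close> below). For a numerical
  semigroup \<open>T\<close> the set \<open>LS T\<close> consists of the gaps \<open>x\<close> whose mirror \<open>x\<^sup>*\<close> is also a
  gap; it is closed under \<open>x \<mapsto> x\<^sup>*\<close>, and \<open>T\<close> is symmetric exactly when \<open>F\<close> is odd and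
  \<open>LS T = {}\<close>. Removing from a symmetric \<open>S\<close> a set \<open>A\<close> of elements between \<open>F/2\<close> and \<open>F\<close>
  produces \<open>LS (S - A) = A \<union> A\<^sup>*\<close>, of size \<open>2 #A\<close>. Conversely, if \<open>#LS T\<close> is even then
  \<open>F\<close> is odd (for even \<open>F\<close> the point \<open>F/2\<close> lies in \<open>LS T\<close> and is its only fixed point),
  and adjoining to \<open>T\<close> the upper half \<open>A\<close> of \<open>LS T\<close> yields a semigroup \<open>S\<close> with
  \<open>LS S = {}\<close>, i.e. a symmetric one, with \<open>T = S - A\<close>.
\<close>

abbreviation mirror :: "nat set \<Rightarrow> nat \<Rightarrow> nat" where
  "mirror S x \<equiv> nat (frob S - int x)"

lemma numerical_semigroup_0: "numerical_semigroup S \<Longrightarrow> 0 \<in> S"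
  unfolding numerical_semigroup_def by blast

lemma numerical_semigroup_add: "numerical_semigroup S \<Longrightarrow> a \<in> S \<Longrightarrow> b \<in> S \<Longrightarrow> a + b \<in> S"
  unfolding numerical_semigroup_def by blast

lemma numerical_semigroup_finite_gaps: "numerical_semigroup S \<Longrightarrow> finite (UNIV - S)"
  unfolding numerical_semigroup_def by blast

lemma numerical_semigroup_Un:
  assumes "numerical_semigroup T"
    and "\<And>b t. b \<in> B \<Longrightarrow> t \<in> T \<Longrightarrow> b + t \<in> T \<union> B"
    and "\<And>b b'. b \<in> B \<Longrightarrow> b' \<in> B \<Longrightarrow> b + b' \<in> T \<union> B"
  shows "numerical_semigroup (T \<union> B)"
  unfolding numerical_semigroup_def
proof (intro conjI ballI)
  show "0 \<in> T \<union> B" using numerical_semigroup_0[OF assms(1)] by simp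
  show "finite (UNIV - (T \<union> B))"
    using numerical_semigroup_finite_gaps[OF assms(1)] by (rule finite_subset[rotated]) auto
  fix a b assume "a \<in> T \<union> B" "b \<in> T \<union> B"
  then show "a + b \<in> T \<union> B"
    using assms(2)[of a b] assms(2)[of b a] assms(3)[of a b] numerical_semigroup_add[OF assms(1)]
    by (auto simp: add.commute)
qed

lemma frob_eqI:
  assumes "F \<notin> int ` S" and "\<And>z. F < z \<Longrightarrow> z \<in> int ` S"
  shows "frob S = F"
  unfolding frob_def
  by (rule Greatest_equality) (use assms in \<open>force simp: not_le[symmetric]\<close>)+

lemma frob_numerical_semigroup:
  assumes "numerical_semigroup S"
  shows "frob S \<notin> int ` S \<and> (\<forall>z. frob S < z \<longrightarrow> z \<in> int ` S)"
proof -
  define F where "F = (if S = UNIV then -1 else int (Max (UNIV - S)))"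
  have fin: "finite (UNIV - S)" using numerical_semigroup_finite_gaps[OF assms] .
  have notin: "F \<notin> int ` S"
    using Max_in[OF fin] unfolding F_def by (auto simp: image_iff)
  have above: "z \<in> int ` S" if "F < z" for z
  proof -
    have "0 \<le> z" using that unfolding F_def by (auto split: if_splits)
    then obtain m where m: "z = int m" using nonneg_int_cases by blast
    have "m \<in> S" using that Max_ge[OF fin, of m] unfolding F_def m by (auto split: if_splits)
    then show ?thesis using m by simp
  qed
  show ?thesis using frob_eqI[OF notin above] notin above by simp
qed

lemma greater_frob_in: "numerical_semigroup S \<Longrightarrow> frob S < int x \<Longrightarrow> x \<in> S"
  using frob_numerical_semigroup by force

lemma gap_le_frob: "numerical_semigroup S \<Longrightarrow> x \<notin> S \<Longrightarrow> int x \<le> frob S"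
  using greater_frob_in by force

lemma nat_frob_notin: "numerical_semigroup S \<Longrightarrow> 0 \<le> frob S \<Longrightarrow> nat (frob S) \<notin> S"
  using frob_numerical_semigroup by force

lemma frob_ge_minus_one:
  assumes "numerical_semigroup S"
  shows "-1 \<le> frob S"
proof (rule ccontr)
  assume "\<not> -1 \<le> frob S"
  then have "-1 \<in> int ` S" using frob_numerical_semigroup[OF assms] by auto
  then show False by auto
qed

lemma frob_neq_0: "numerical_semigroup S \<Longrightarrow> frob S \<noteq> 0"
  using frob_numerical_semigroup numerical_semigroup_0 by force

lemma complement_notin:
  assumes "numerical_semigroup S" "nat F \<notin> S" "x \<in> S" "int x \<le> F"
  shows "nat (F - int x) \<notin> S"
proof
  assume "nat (F - int x) \<in> S"
  then have "x + nat (F - int x) \<in> S" using numerical_semigroup_add assms by blast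
  moreover have "x + nat (F - int x) = nat F" using assms(4) by linarith
  ultimately show False using assms(2) by simp
qed

lemma LS_eq:
  assumes "numerical_semigroup T"
  shows "LS T = {x. x \<notin> T \<and> mirror T x \<notin> T}"
proof -
  have "frob T - int x \<in> int ` NS T \<longleftrightarrow> mirror T x \<in> T" if "x \<notin> T" for x
  proof -
    have "int x \<le> frob T" using gap_le_frob[OF assms that] .
    moreover have "x \<noteq> 0" using that numerical_semigroup_0[OF assms] by metis
    ultimately show ?thesis unfolding NS_def by (force simp: image_iff)
  qed
  then show ?thesis unfolding LS_def by auto
qed

lemma finite_LS: "numerical_semigroup T \<Longrightarrow> finite (LS T)"
  using numerical_semigroup_finite_gaps by (rule finite_subset[rotated]) (auto simp: LS_def)

lemma LS_less_frob:
  assumes "numerical_semigroup T" "x \<in> LS T"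
  shows "int x < frob T"
  using assms gap_le_frob numerical_semigroup_0 by (fastforce simp: LS_eq le_less)

lemma LS_mirror:
  assumes "numerical_semigroup T" "x \<in> LS T"
  shows "mirror T x \<in> LS T" "mirror T (mirror T x) = x"
  using LS_less_frob[OF assms] assms by (auto simp: LS_eq)

lemma LS_add_in:
  assumes T: "numerical_semigroup T" and x: "x \<in> LS T" and t: "t \<in> T"
  shows "x + t \<in> T \<union> LS T"
proof (rule ccontr)
  assume "x + t \<notin> T \<union> LS T"
  then have gap: "x + t \<notin> T" and mirror_in: "mirror T (x + t) \<in> T" using LS_eq[OF T] by auto
  then have "int (x + t) \<le> frob T" using gap_le_frob[OF T] by blast
  then have "mirror T (x + t) + t = mirror T x" by linarith
  then have "mirror T x \<in> T" using numerical_semigroup_add[OF T mirror_in t] by simp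
  then show False using x LS_eq[OF T] by auto
qed

lemma irreducible_LS_empty:
  assumes irr: "irreducible_ns S" and odd: "odd (frob S)"
  shows "LS S = {}"
proof (rule ccontr)
  assume nonempty: "LS S \<noteq> {}"
  have S: "numerical_semigroup S" using irr irreducible_ns_def by blast
  define h where "h = Max (LS S)"
  have h: "h \<in> LS S" and h_max: "\<And>y. y \<in> LS S \<Longrightarrow> y \<le> h"
    using finite_LS[OF S] nonempty unfolding h_def by auto
  have h_gaps: "h \<notin> S" "mirror S h \<notin> S" using h LS_eq[OF S] by auto
  have "mirror S h \<le> h" using h_max LS_mirror(1)[OF S h] .
  moreover have h_less: "int h < frob S" using LS_less_frob[OF S h] .
  ultimately have "frob S \<le> 2 * int h" by linarith
  then have h_upper: "frob S < 2 * int h" using odd by (auto simp: le_less)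
  text \<open>By maximality of \<open>h\<close> in \<open>LS S\<close>, adjoining \<open>h\<close> keeps \<open>S\<close> closed, and so does adjoining \<open>F\<close>;
    \<open>S\<close> is the intersection of the two extensions.\<close>
  have S_h: "numerical_semigroup (S \<union> {h})"
  proof (rule numerical_semigroup_Un[OF S])
    fix s t assume "s \<in> {h}" "t \<in> S"
    then show "s + t \<in> S \<union> {h}"
      using LS_add_in[OF S h, of t] h_max[of "h + t"] by (cases "t = 0") auto
  next
    fix s s' assume "s \<in> {h}" "s' \<in> {h}"
    then show "s + s' \<in> S \<union> {h}" using h_upper greater_frob_in[OF S, of "h + h"] by simp
  qed
  moreover have S_frob: "numerical_semigroup (S \<union> {nat (frob S)})"
  proof (rule numerical_semigroup_Un[OF S])
    fix s t assume "s \<in> {nat (frob S)}" "t \<in> S"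
    moreover have "frob S < int (nat (frob S) + t)" if "t \<noteq> 0" using that h_less by linarith
    ultimately show "s + t \<in> S \<union> {nat (frob S)}" using greater_frob_in[OF S] by (cases "t = 0") auto
  next
    fix s s' assume "s \<in> {nat (frob S)}" "s' \<in> {nat (frob S)}"
    moreover have "frob S < int (nat (frob S) + nat (frob S))" using h_less by linarith
    ultimately show "s + s' \<in> S \<union> {nat (frob S)}" using greater_frob_in[OF S] by auto
  qed
  have "h \<noteq> nat (frob S)" using h_gaps(2) numerical_semigroup_0[OF S] by auto
  then have "S = (S \<union> {h}) \<inter> (S \<union> {nat (frob S)})" by auto
  moreover have "S \<subset> S \<union> {h}" "S \<subset> S \<union> {nat (frob S)}"
    using h_gaps(1) nat_frob_notin[OF S] h_less by auto
  ultimately show False using irr S_h S_frob unfolding irreducible_ns_def by blast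
qed

lemma LS_empty_irreducible:
  assumes S: "numerical_semigroup S" and LS: "LS S = {}"
  shows "irreducible_ns S"
proof -
  have no_ext: False if S1: "numerical_semigroup S1" "S \<subset> S1" "nat (frob S) \<notin> S1" for S1
  proof -
    obtain y where y: "y \<in> S1" "y \<notin> S" using S1 by blast
    have "mirror S y \<in> S1" using LS LS_eq[OF S] y S1 by blast
    then show False using complement_notin[OF S1(1,3) y(1)] gap_le_frob[OF S y(2)] by blast
  qed
  show ?thesis unfolding irreducible_ns_def
  proof (intro conjI notI)
    assume "\<exists>S1 S2. numerical_semigroup S1 \<and> numerical_semigroup S2 \<and>
              S \<subset> S1 \<and> S \<subset> S2 \<and> S = S1 \<inter> S2"
    then obtain S1 S2 where "numerical_semigroup S1" "numerical_semigroup S2"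
        "S \<subset> S1" "S \<subset> S2" "S = S1 \<inter> S2" by blast
    moreover have "S \<noteq> UNIV" using \<open>S \<subset> S1\<close> by blast
    then have "nat (frob S) \<notin> S" using nat_frob_notin[OF S] greater_frob_in[OF S] by force
    ultimately show False using no_ext by blast
  qed fact
qed

lemma symmetric_ns_iff:
  "symmetric_ns S \<longleftrightarrow> numerical_semigroup S \<and> odd (frob S) \<and> LS S = {}"
proof -
  have "irreducible_ns S \<longleftrightarrow> numerical_semigroup S \<and> LS S = {}" if "odd (frob S)"
    using irreducible_LS_empty[OF _ that] LS_empty_irreducible irreducible_ns_def by blast
  then show ?thesis unfolding symmetric_ns_def by blast
qed

lemma l_num_Diff_upper_half:
  assumes sym: "symmetric_ns S"
    and A: "A \<subseteq> {x \<in> S. frob S < 2 * int x \<and> int x < frob S}"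
    and T: "numerical_semigroup (S - A)"
  shows "l_num (S - A) = 2 * card A"
proof -
  have S: "numerical_semigroup S" and LS_S: "LS S = {}" using sym symmetric_ns_iff by auto
  have frob_T: "frob (S - A) = frob S"
  proof (rule frob_eqI)
    show "frob S \<notin> int ` (S - A)" using frob_numerical_semigroup[OF S] by auto
    show "z \<in> int ` (S - A)" if "frob S < z" for z
      using that frob_numerical_semigroup[OF S] A by force
  qed
  have mirror_A: "mirror S a \<notin> S" "mirror S (mirror S a) = a" if "a \<in> A" for a
  proof -
    have "a \<in> S" "int a < frob S" using that A by auto
    then show "mirror S a \<notin> S" "mirror S (mirror S a) = a"
      using complement_notin[OF S nat_frob_notin[OF S]] by auto
  qed
  have "LS (S - A) = A \<union> mirror S ` A"
  proof (intro equalityI subsetI)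
    fix x assume "x \<in> LS (S - A)"
    then have x: "x \<notin> S - A" "mirror S x \<notin> S - A" using LS_eq[OF T] frob_T by auto
    show "x \<in> A \<union> mirror S ` A"
    proof (cases "x \<in> A")
      case False
      then have "mirror S x \<in> A" using x LS_S LS_eq[OF S] by auto
      moreover have "x = mirror S (mirror S x)" using gap_le_frob[OF S] x False by force
      ultimately show ?thesis by blast
    qed simp
  next
    fix x assume "x \<in> A \<union> mirror S ` A"
    then show "x \<in> LS (S - A)" using mirror_A LS_eq[OF T] frob_T by auto
  qed
  moreover have "finite A"
    by (rule finite_subset[of _ "{..<nat (frob S)}"]) (use A in auto)
  moreover have "inj_on (mirror S) A" using mirror_A(2) by (rule inj_on_inverseI)
  moreover have "A \<inter> mirror S ` A = {}"
  proof -
    have "2 * int (mirror S a) < frob S" if "a \<in> A" for a using that A by auto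
    then show ?thesis using A by fastforce
  qed
  ultimately show ?thesis unfolding l_num_def by (simp add: card_Un_disjoint card_image)
qed

definition upper_LS :: "nat set \<Rightarrow> nat set" where
  "upper_LS T = {x \<in> LS T. frob T < 2 * int x}"

lemma l_num_eq_upper_LS:
  assumes T: "numerical_semigroup T"
  shows "l_num T = 2 * card (upper_LS T) + (if odd (frob T) then 0 else 1)"
proof -
  define B C M where "B = upper_LS T"
    and "C = {x \<in> LS T. 2 * int x < frob T}" and "M = {x \<in> LS T. 2 * int x = frob T}"
  have B_LS: "B \<subseteq> LS T" unfolding B_def upper_LS_def by blast
  have "C = mirror T ` B"
  proof (intro equalityI subsetI)
    fix x assume "x \<in> C"
    then have x: "x \<in> LS T" "2 * int x < frob T" unfolding C_def by blast+
    then have "mirror T x \<in> B" unfolding B_def upper_LS_def using LS_mirror(1)[OF T] by auto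
    moreover have "x = mirror T (mirror T x)" using LS_mirror(2)[OF T x(1)] by simp
    ultimately show "x \<in> mirror T ` B" by blast
  next
    fix x assume "x \<in> mirror T ` B"
    then obtain b where b: "b \<in> LS T" "frob T < 2 * int b" "x = mirror T b"
      unfolding B_def upper_LS_def by blast
    then show "x \<in> C" using LS_mirror(1)[OF T b(1)] LS_less_frob[OF T b(1)] by (auto simp: C_def)
  qed
  moreover have "inj_on (mirror T) B"
    by (rule inj_on_inverseI[where g = "mirror T"]) (use B_LS LS_mirror(2)[OF T] in blast)
  moreover have "card M = (if odd (frob T) then 0 else 1)"
  proof (cases "odd (frob T)")
    case False
    then have F: "2 \<le> frob T" using frob_ge_minus_one[OF T] frob_neq_0[OF T] by presburger
    define m where "m = nat (frob T div 2)"
    have "int m = frob T div 2" using F unfolding m_def by simp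
    then have m: "2 * int m = frob T" using False by (simp add: even_two_times_div_two)
    have mirror_m: "mirror T m = m" by (simp add: m[symmetric])
    have "m \<notin> T"
    proof
      assume "m \<in> T"
      then have "mirror T m \<notin> T" using complement_notin[OF T nat_frob_notin[OF T]] F m by auto
      then show False using \<open>m \<in> T\<close> mirror_m by simp
    qed
    then have "m \<in> LS T" using mirror_m LS_eq[OF T] by simp
    then have "M = {m}" using m unfolding M_def by auto
    then show ?thesis using False by simp
  next
    case True
    then have "M = {}" unfolding M_def by (auto dest: sym)
    then show ?thesis using True by simp
  qed
  moreover have "LS T = (B \<union> C) \<union> M" "B \<inter> C = {}" "(B \<union> C) \<inter> M = {}"
    unfolding B_def C_def M_def upper_LS_def by auto
  moreover have "finite B" "finite C" "finite M"
    using finite_LS[OF T] unfolding B_def C_def M_def upper_LS_def by auto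
  ultimately show ?thesis unfolding l_num_def B_def
    by (simp add: card_Un_disjoint card_image)
qed

lemma upper_LS_in_half:
  assumes T: "numerical_semigroup T" and x: "x \<in> upper_LS T"
  shows "x \<notin> T" "frob T < 2 * int x" "int x < frob T"
proof -
  have "x \<in> LS T" using x unfolding upper_LS_def by blast
  then show "x \<notin> T" "int x < frob T" using LS_eq[OF T] LS_less_frob[OF T] by auto
  show "frob T < 2 * int x" using x unfolding upper_LS_def by blast
qed

lemma numerical_semigroup_Un_upper_LS:
  assumes T: "numerical_semigroup T"
  shows "numerical_semigroup (T \<union> upper_LS T)"
proof (rule numerical_semigroup_Un[OF T])
  fix b t assume b: "b \<in> upper_LS T" and t: "t \<in> T"
  have "b \<in> LS T" using b by (simp add: upper_LS_def)
  then have "b + t \<in> T \<union> LS T" using LS_add_in[OF T _ t] by blast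
  moreover have "frob T < 2 * int (b + t)" using upper_LS_in_half(2)[OF T b] by simp
  ultimately show "b + t \<in> T \<union> upper_LS T" unfolding upper_LS_def by blast
next
  fix b b' assume "b \<in> upper_LS T" "b' \<in> upper_LS T"
  then have "frob T < 2 * int b" "frob T < 2 * int b'" using upper_LS_in_half(2)[OF T] by blast+
  then have "frob T < int b + int b'" by linarith
  then show "b + b' \<in> T \<union> upper_LS T" using greater_frob_in[OF T, of "b + b'"] by simp
qed

lemma frob_Un_upper_LS:
  assumes T: "numerical_semigroup T"
  shows "frob (T \<union> upper_LS T) = frob T"
  by (rule frob_eqI) (use frob_numerical_semigroup[OF T] upper_LS_in_half[OF T] in force)+

lemma symmetric_Un_upper_LS:
  assumes T: "numerical_semigroup T" and odd: "odd (frob T)"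
  shows "symmetric_ns (T \<union> upper_LS T)"
proof -
  let ?S = "T \<union> upper_LS T"
  have S: "numerical_semigroup ?S" using numerical_semigroup_Un_upper_LS[OF T] .
  have "mirror T x \<in> ?S" if x: "x \<notin> ?S" for x
  proof (rule ccontr)
    assume "mirror T x \<notin> ?S"
    then have "x \<in> LS T" using x LS_eq[OF T] by auto
    moreover have "2 * int x < frob T" using calculation x odd by (auto simp: upper_LS_def) presburger
    ultimately have "mirror T x \<in> upper_LS T"
      using LS_mirror[OF T] LS_less_frob[OF T] by (auto simp: upper_LS_def)
    then show False using \<open>mirror T x \<notin> ?S\<close> by simp
  qed
  then have "LS ?S = {}" using LS_eq[OF S] frob_Un_upper_LS[OF T] by auto
  then show ?thesis using symmetric_ns_iff S odd frob_Un_upper_LS[OF T] by simp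
qed

lemma half_less_iff: "real_of_int F / 2 < real x \<longleftrightarrow> F < 2 * int x"
  by linarith

theorem proposition19:
  fixes n :: nat
  shows "(\<forall>S A. symmetric_ns S \<longrightarrow>
            A \<subseteq> {x \<in> S. real_of_int (frob S) / 2 < real x \<and> int x < frob S} \<longrightarrow>
            card A = n \<longrightarrow> numerical_semigroup (S - A) \<longrightarrow>
            l_num (S - A) = 2 * n)
       \<and> (\<forall>T. numerical_semigroup T \<longrightarrow> l_num T = 2 * n \<longrightarrow>
            (\<exists>S A. symmetric_ns S \<and> frob S = frob T \<and>
               A \<subseteq> {x \<in> S. real_of_int (frob S) / 2 < real x \<and> int x < frob S} \<and>
               card A = n \<and> T = S - A))"
proof (intro conjI allI impI)
  fix S A assume "symmetric_ns S" "numerical_semigroup (S - A)" "card A = n"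
    and A: "A \<subseteq> {x \<in> S. real_of_int (frob S) / 2 < real x \<and> int x < frob S}"
  then show "l_num (S - A) = 2 * n" using l_num_Diff_upper_half A[unfolded half_less_iff] by blast
next
  fix T assume T: "numerical_semigroup T" and l: "l_num T = 2 * n"
  have odd: "odd (frob T)" using l l_num_eq_upper_LS[OF T] by (auto split: if_splits) presburger
  then have card: "card (upper_LS T) = n" using l l_num_eq_upper_LS[OF T] by simp
  let ?S = "T \<union> upper_LS T"
  have "upper_LS T \<subseteq> {x \<in> ?S. real_of_int (frob ?S) / 2 < real x \<and> int x < frob ?S}"
    unfolding half_less_iff frob_Un_upper_LS[OF T] using upper_LS_in_half[OF T] by blast
  moreover have "T = ?S - upper_LS T" using upper_LS_in_half(1)[OF T] by auto
  ultimately show "\<exists>S A. symmetric_ns S \<and> frob S = frob T \<and>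
      A \<subseteq> {x \<in> S. real_of_int (frob S) / 2 < real x \<and> int x < frob S} \<and> card A = n \<and> T = S - A"
    using symmetric_Un_upper_LS[OF T odd] frob_Un_upper_LS[OF T] card by blast
qed

end
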